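(* Let $a>0$, $\alpha\in[0,1)$ and $f\in\mathcal C_a$. Then $s_\alpha=(1-\alpha)^{-1}F_\alpha(x_\alpha^+)<a$.
   Context: $\mathcal C_a$ is the set of $C^1$ functions $f:\mathbb R\to\mathbb R$ that are even, satisfy $f(s)=|s|$ for $|s|\ge a$ and are strictly convex on $[-a,a]$. For $f\in\mathcal C_a$: $F_\alpha(s)=f(s)-\alpha s$, $x_\alpha^+=(f')^{-1}(\alpha)\in[0,a)$ (inverse of $f':[-a,a]\to[-1,1]$); $F_\alpha$ decreases on $(-\infty,x_\alpha^+]$ and increases on $[x_\alpha^+,\infty)$. Let $F_\alpha^{-1}$ be the inverse of $F_\alpha|_{[x_\alpha^+,\infty)}$, $\phi=F_\alpha^{-1}\circ F_\alpha$, $\delta_x=(1-\alpha)^{-1}F_\alpha(x)-\phi(x)$ and $s_\alpha=x_\alpha^++\delta_{x_\alpha^+}$. *)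

theory Defs
  imports "HOL-Analysis.Analysis"
begin

definition strictly_convex_on :: "real set \<Rightarrow> (real \<Rightarrow> real) \<Rightarrow> bool" where
  "strictly_convex_on S f \<longleftrightarrow>
     (\<forall>x\<in>S. \<forall>y\<in>S. \<forall>t::real. x \<noteq> y \<and> 0 < t \<and> t < 1 \<longrightarrow>
        f ((1 - t) * x + t * y) < (1 - t) * f x + t * f y)"

definition class_C :: "real \<Rightarrow> (real \<Rightarrow> real) set" where
  "class_C a = {f. (\<forall>x. f differentiable (at x)) \<and> continuous_on UNIV (deriv f)
       \<and> (\<forall>s. f (- s) = f s)
       \<and> (\<forall>s. a \<le> \<bar>s\<bar> \<longrightarrow> f s = \<bar>s\<bar>)
       \<and> strictly_convex_on {-a..a} f}"

definition F_alpha :: "(real \<Rightarrow> real) \<Rightarrow> real \<Rightarrow> real \<Rightarrow> real" where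
  "F_alpha f \<alpha> s = f s - \<alpha> * s"

definition x_plus :: "real \<Rightarrow> (real \<Rightarrow> real) \<Rightarrow> real \<Rightarrow> real" where
  "x_plus a f \<alpha> = (THE x. x \<in> {-a..a} \<and> deriv f x = \<alpha>)"

definition F_alpha_inv :: "real \<Rightarrow> (real \<Rightarrow> real) \<Rightarrow> real \<Rightarrow> real \<Rightarrow> real" where
  "F_alpha_inv a f \<alpha> t = (THE y. x_plus a f \<alpha> \<le> y \<and> F_alpha f \<alpha> y = t)"

definition phi :: "real \<Rightarrow> (real \<Rightarrow> real) \<Rightarrow> real \<Rightarrow> real \<Rightarrow> real" where
  "phi a f \<alpha> x = F_alpha_inv a f \<alpha> (F_alpha f \<alpha> x)"

definition delta :: "real \<Rightarrow> (real \<Rightarrow> real) \<Rightarrow> real \<Rightarrow> real \<Rightarrow> real" where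
  "delta a f \<alpha> x = F_alpha f \<alpha> x / (1 - \<alpha>) - phi a f \<alpha> x"

definition s_alpha :: "real \<Rightarrow> (real \<Rightarrow> real) \<Rightarrow> real \<Rightarrow> real" where
  "s_alpha a f \<alpha> = x_plus a f \<alpha> + delta a f \<alpha> (x_plus a f \<alpha>)"

end

theory Submission
  imports Defs
begin

(* The point x+ = x_plus a f alpha is the unique solution of f' x = alpha on [-a,a], and strict
   convexity makes it the strict minimiser of F_alpha to its right. Hence phi fixes x+, so that
   s_alpha = F_alpha(x+) / (1 - alpha), and F_alpha(x+) < F_alpha(a) = (1 - alpha) a because
   x+ < a (the slope of f at a is 1, not alpha). *)

lemma DERIV_unique_of_eq_on:
  assumes "(f has_real_derivative D) (at x)" and "(g has_real_derivative E) (at x)"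
    and "at x within S \<noteq> bot" and "x \<in> S" and "\<And>y. y \<in> S \<Longrightarrow> f y = g y"
  shows "D = E"
proof -
  have "(g has_real_derivative D) (at x within S)"
    by (rule has_field_derivative_transform_within[OF has_field_derivative_at_within[OF assms(1)],
          where d = 1]) (use assms(4,5) in auto)
  with has_field_derivative_at_within[OF assms(2)] assms(3) show ?thesis
    using has_field_derivative_unique by blast
qed

lemma strictly_convex_on_imp_convex_on:
  assumes "convex S" and "strictly_convex_on S f"
  shows "convex_on S f"
proof (rule convex_onI)
  fix t :: real and x y assume "0 < t" "t < 1" "x \<in> S" "y \<in> S"
  then show "f ((1 - t) *\<^sub>R x + t *\<^sub>R y) \<le> (1 - t) * f x + t * f y"
  proof (cases "x = y")
    case False
    with assms(2) \<open>0 < t\<close> \<open>t < 1\<close> \<open>x \<in> S\<close> \<open>y \<in> S\<close>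
    have "f ((1 - t) * x + t * y) < (1 - t) * f x + t * f y"
      unfolding strictly_convex_on_def by blast
    then show ?thesis by simp
  qed (simp add: algebra_simps)
qed (rule assms(1))

text \<open>Unlike \<open>convex_on_imp_above_tangent\<close>, the base point may lie on the boundary of S,
  since f is assumed differentiable there in the two-sided sense.\<close>
lemma convex_on_above_tangent_at:
  assumes "convex_on S f" and "x \<in> S" and "y \<in> S" and "(f has_real_derivative D) (at x)"
  shows "f x + D * (y - x) \<le> f y"
proof (rule ccontr)
  assume below_tangent: "\<not> ?thesis"
  define h where "h t = (1 - t) * f x + t * f y - f (x + t * (y - x))" for t
  have segment: "((\<lambda>t. x + t * (y - x)) has_real_derivative y - x) (at 0)"
    by (auto intro!: derivative_eq_intros)
  have "(f has_real_derivative D) (at (x + 0 * (y - x)))"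
    using assms(4) by simp
  from DERIV_chain2[OF this segment]
  have "((\<lambda>t. f (x + t * (y - x))) has_real_derivative D * (y - x)) (at 0)"
    by simp
  moreover have "((\<lambda>t. (1 - t) * f x + t * f y) has_real_derivative f y - f x) (at 0)"
    by (auto intro!: derivative_eq_intros)
  ultimately have "(h has_real_derivative f y - f x - D * (y - x)) (at 0)"
    unfolding h_def using DERIV_diff by blast
  moreover have "f y - f x - D * (y - x) < 0"
    using below_tangent by simp
  ultimately obtain d where "d > 0" and d: "\<forall>t>0. t < d \<longrightarrow> h (0 + t) < h 0"
    using DERIV_neg_dec_right by blast
  define t where "t = min (d / 2) (1 / 2)"
  have t: "0 < t" "t < d" "t \<le> 1" using \<open>d > 0\<close> by (auto simp: t_def)
  have "f ((1 - t) *\<^sub>R x + t *\<^sub>R y) \<le> (1 - t) * f x + t * f y"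
    using convex_onD[OF assms(1)] t assms(2,3) by simp
  then have "0 \<le> h t" by (simp add: h_def algebra_simps)
  with d[rule_format, OF t(1,2)] show False by (simp add: h_def)
qed

lemma strictly_convex_on_above_tangent_at:
  assumes "convex S" and "strictly_convex_on S f" and "x \<in> S" and "y \<in> S" and "x \<noteq> y"
    and "(f has_real_derivative D) (at x)"
  shows "f x + D * (y - x) < f y"
proof -
  define m where "m = (x + y) / 2"
  have "m \<in> S"
    using convexD_alt[OF assms(1,3,4), of "1 / 2"] by (simp add: m_def add_divide_distrib)
  have "f ((1 - 1 / 2) * x + 1 / 2 * y) < (1 - 1 / 2) * f x + 1 / 2 * f y"
    using assms(2)[unfolded strictly_convex_on_def, rule_format, of x y "1 / 2"] assms(3-5)
    by simp
  then have "f m < (f x + f y) / 2" by (simp add: m_def add_divide_distrib)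
  moreover have "f x + D * (m - x) \<le> f m"
    using convex_on_above_tangent_at[OF strictly_convex_on_imp_convex_on[OF assms(1,2)]
        assms(3) \<open>m \<in> S\<close> assms(6)] .
  moreover have "D * (y - x) = 2 * (D * (m - x))"
    by (simp add: m_def algebra_simps)
  ultimately show ?thesis by (auto simp: field_simps)
qed

context
  fixes a :: real and f :: "real \<Rightarrow> real"
  assumes a_pos: "0 < a" and f_class_C: "f \<in> class_C a"
begin

lemma class_C_DERIV: "(f has_real_derivative deriv f x) (at x)"
  using f_class_C DERIV_deriv_iff_real_differentiable unfolding class_C_def by blast

lemma class_C_deriv_continuous: "continuous_on UNIV (deriv f)"
  using f_class_C unfolding class_C_def by blast

lemma class_C_eq_abs: "a \<le> \<bar>s\<bar> \<Longrightarrow> f s = \<bar>s\<bar>"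
  using f_class_C unfolding class_C_def by blast

lemma class_C_strictly_convex: "strictly_convex_on {-a..a} f"
  using f_class_C unfolding class_C_def by blast

lemma class_C_above_tangent:
  assumes "x \<in> {-a..a}" and "y \<in> {-a..a}" and "x \<noteq> y"
  shows "f x + deriv f x * (y - x) < f y"
  using strictly_convex_on_above_tangent_at[OF convex_real_interval(5) class_C_strictly_convex
      assms class_C_DERIV] .

lemma class_C_deriv_at_endpoints: "deriv f a = 1" "deriv f (-a) = -1"
proof -
  have "f y = y" if "y \<in> {a..a + 1}" for y
    using class_C_eq_abs[of y] that a_pos by simp
  then show "deriv f a = 1"
    by (intro DERIV_unique_of_eq_on[OF class_C_DERIV DERIV_ident, where S = "{a..a + 1}"])
      (simp_all add: at_within_Icc_at_right)
  have "f y = - y" if "y \<in> {-a - 1..-a}" for y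
    using class_C_eq_abs[of y] that a_pos by simp
  then show "deriv f (-a) = -1"
    by (intro DERIV_unique_of_eq_on[OF class_C_DERIV DERIV_minus[OF DERIV_ident],
          where S = "{-a - 1..-a}"])
      (simp_all add: at_within_Icc_at_left)
qed

lemma class_C_ex1_deriv_eq:
  assumes "-1 \<le> \<alpha>" and "\<alpha> \<le> 1"
  shows "\<exists>!x. x \<in> {-a..a} \<and> deriv f x = \<alpha>"
proof -
  have "\<exists>x. -a \<le> x \<and> x \<le> a \<and> deriv f x = \<alpha>"
    by (rule IVT')
      (use class_C_deriv_at_endpoints a_pos assms continuous_on_subset[OF class_C_deriv_continuous]
        in simp_all)
  then obtain x where x: "x \<in> {-a..a}" "deriv f x = \<alpha>"
    by auto
  have "y = x" if "y \<in> {-a..a}" "deriv f y = \<alpha>" for y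
  proof (rule ccontr)
    assume "y \<noteq> x"
    then have "f x + \<alpha> * (y - x) < f y" "f y + \<alpha> * (x - y) < f x"
      using class_C_above_tangent[OF x(1) that(1)] class_C_above_tangent[OF that(1) x(1)] x(2) that(2)
      by auto
    then show False by (simp add: algebra_simps)
  qed
  with x show ?thesis by blast
qed

lemma x_plus_spec:
  assumes "-1 \<le> \<alpha>" and "\<alpha> \<le> 1"
  shows "x_plus a f \<alpha> \<in> {-a..a}" and "deriv f (x_plus a f \<alpha>) = \<alpha>"
  using theI'[OF class_C_ex1_deriv_eq[OF assms]] unfolding x_plus_def by auto

context
  fixes \<alpha> :: real
  assumes alpha_ge: "-1 \<le> \<alpha>" and alpha_less: "\<alpha> < 1"
begin

lemma x_plus_less: "x_plus a f \<alpha> < a"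
proof -
  have "x_plus a f \<alpha> \<le> a" "x_plus a f \<alpha> \<noteq> a"
    using x_plus_spec[OF alpha_ge] class_C_deriv_at_endpoints(1) alpha_less by auto
  then show ?thesis by simp
qed

lemma F_alpha_at_right_endpoint: "F_alpha f \<alpha> a = (1 - \<alpha>) * a"
  using class_C_eq_abs[of a] a_pos by (simp add: F_alpha_def algebra_simps)

lemma F_alpha_x_plus_less:
  assumes "x_plus a f \<alpha> < y"
  shows "F_alpha f \<alpha> (x_plus a f \<alpha>) < F_alpha f \<alpha> y"
proof -
  let ?x = "x_plus a f \<alpha>"
  have x: "?x \<in> {-a..a}" "deriv f ?x = \<alpha>"
    using x_plus_spec alpha_ge alpha_less by auto
  have inside: "F_alpha f \<alpha> ?x < F_alpha f \<alpha> z" if "z \<in> {-a..a}" "?x < z" for z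
    using class_C_above_tangent[OF x(1) that(1)] x(2) that(2)
    by (simp add: F_alpha_def algebra_simps)
  show ?thesis
  proof (cases "y \<le> a")
    case True
    with assms x(1) have "y \<in> {-a..a}" by simp
    then show ?thesis using assms by (rule inside)
  next
    case False
    have "a \<in> {-a..a}" using a_pos by simp
    then have "F_alpha f \<alpha> ?x < F_alpha f \<alpha> a"
      using x_plus_less by (rule inside)
    also have "\<dots> < (1 - \<alpha>) * y"
      using F_alpha_at_right_endpoint False alpha_less by simp
    also have "\<dots> = F_alpha f \<alpha> y"
      using class_C_eq_abs[of y] False a_pos by (simp add: F_alpha_def algebra_simps)
    finally show ?thesis .
  qed
qed

lemma phi_x_plus: "phi a f \<alpha> (x_plus a f \<alpha>) = x_plus a f \<alpha>"
  unfolding phi_def F_alpha_inv_def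
proof (rule the_equality)
  fix y assume y: "x_plus a f \<alpha> \<le> y \<and> F_alpha f \<alpha> y = F_alpha f \<alpha> (x_plus a f \<alpha>)"
  show "y = x_plus a f \<alpha>"
  proof (rule ccontr)
    assume "y \<noteq> x_plus a f \<alpha>"
    with y have "x_plus a f \<alpha> < y" by simp
    from F_alpha_x_plus_less[OF this] y show False by simp
  qed
qed simp

lemma s_alpha_eq: "s_alpha a f \<alpha> = F_alpha f \<alpha> (x_plus a f \<alpha>) / (1 - \<alpha>)"
  by (simp add: s_alpha_def delta_def phi_x_plus)

lemma s_alpha_less: "s_alpha a f \<alpha> < a"
proof -
  have "F_alpha f \<alpha> (x_plus a f \<alpha>) < a * (1 - \<alpha>)"
    using F_alpha_x_plus_less[OF x_plus_less] F_alpha_at_right_endpoint by (simp add: algebra_simps)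
  with alpha_less show ?thesis by (simp add: s_alpha_eq pos_divide_less_eq)
qed

end

end

theorem corollary3p15:
  fixes a \<alpha> :: real and f :: "real \<Rightarrow> real"
  assumes "a > 0" and "0 \<le> \<alpha>" and "\<alpha> < 1" and "f \<in> class_C a"
  shows "s_alpha a f \<alpha> = F_alpha f \<alpha> (x_plus a f \<alpha>) / (1 - \<alpha>)
         \<and> s_alpha a f \<alpha> < a"
proof -
  have "-1 \<le> \<alpha>" using assms(2) by simp
  with assms show ?thesis
    using s_alpha_eq[of a f \<alpha>] s_alpha_less[of a f \<alpha>] by simp
qed

end
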